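(* Let $\beta\in(0,1)$ be fixed, observations noiseless, $\Psi=\Psi_M$ (Matérn with $\nu>d/2$), and let $f=Tv$ for some fixed $v\in L_2(\Omega)$ (with $f\neq0$). Let $\widehat{CI}_{n,\beta}$ be the confidence interval centered at $\hat f_n$ with $\hat\sigma^2=Y^TR^{-1}Y$, i.e. $|\widehat{CI}_{n,\beta}(x)|=2q\sqrt{Y^TR^{-1}Y(1-r(x)^TR^{-1}r(x))}$, $q=\Phi^{-1}(1-\beta/2)$. For any sampling scheme $\mathcal{X}$ satisfying the fill distance condition, there exists $N$ (depending on $\Psi,\Omega,f$ and the fill distance constants) such that for all $n\ge N$, $$\big\|(f-\hat f_n)/|\widehat{CI}_{n,\beta}|\big\|_{L_\infty(\Omega)}\le C,$$ where $C>0$ depends only on $f,\Psi,\Omega,\beta$.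
   Context: $\Omega\subset\mathbb{R}^d$ is convex and compact with positive Lebesgue measure. Matérn: $\Psi_M(h)=\frac{1}{\Gamma(\nu-d/2)2^{\nu-d/2-1}}\|h\|_2^{\nu-d/2}K_{\nu-d/2}(\|h\|_2)$. $T:L_2(\Omega)\to L_2(\Omega)$, $Tv(x)=\int_\Omega\Psi(x-y)v(y)dy$. Sampling scheme: sequence $\{X_n\}$ of sets of $n$ distinct points of $\Omega$; fill distance condition: $\sup_{x\in\Omega}\min_{x_j\in X}\|x-x_j\|_2\asymp n^{-1/d}$. For $X=\{x_1,\dots,x_n\}$: $Y=(f(x_k))_k$, $r(x)=(\Psi(x-x_k))_k$, $R=(\Psi(x_j-x_k))_{jk}$, $\hat f_n(x)=r(x)^TR^{-1}Y$. Convention $0/0=0$. *)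

theory Defs
  imports "HOL-Analysis.Analysis" "HOL-Probability.Distributions"
    "Jordan_Normal_Form.Gauss_Jordan_Elimination"
begin

definition besselK :: "real \<Rightarrow> real \<Rightarrow> real" where
  "besselK a r = (LBINT t:{0..}. exp (- r * cosh t) * cosh (a * t))"

text \<open>Matern kernel with smoothness nu in dimension d; at h = 0 it takes its limiting value 1.\<close>
definition matern :: "real \<Rightarrow> nat \<Rightarrow> ('a::real_normed_vector) \<Rightarrow> real" where
  "matern \<nu> d h = (let a = \<nu> - real d / 2 in
     if h = 0 then 1
     else 1 / (Gamma a * 2 powr (a - 1)) * norm h powr a * besselK a (norm h))"

definition kernel_op :: "('a::euclidean_space \<Rightarrow> real) \<Rightarrow> 'a set \<Rightarrow> ('a \<Rightarrow> real) \<Rightarrow> 'a \<Rightarrow> real" where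
  "kernel_op \<Psi> \<Omega> v x = (LINT y|lebesgue_on \<Omega>. \<Psi> (x - y) * v y)"

definition kmat :: "('a::real_normed_vector \<Rightarrow> real) \<Rightarrow> 'a list \<Rightarrow> real mat" where
  "kmat \<Psi> xs = mat (length xs) (length xs) (\<lambda>(j,k). \<Psi> (xs ! j - xs ! k))"

definition kvec :: "('a::real_normed_vector \<Rightarrow> real) \<Rightarrow> 'a list \<Rightarrow> 'a \<Rightarrow> real vec" where
  "kvec \<Psi> xs x = vec (length xs) (\<lambda>k. \<Psi> (x - xs ! k))"

definition obsvec :: "('a \<Rightarrow> real) \<Rightarrow> 'a list \<Rightarrow> real vec" where
  "obsvec f xs = vec (length xs) (\<lambda>k. f (xs ! k))"

definition kinv :: "('a::real_normed_vector \<Rightarrow> real) \<Rightarrow> 'a list \<Rightarrow> real mat" where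
  "kinv \<Psi> xs = the (mat_inverse (kmat \<Psi> xs))"

definition kriging :: "('a::real_normed_vector \<Rightarrow> real) \<Rightarrow> 'a list \<Rightarrow> ('a \<Rightarrow> real) \<Rightarrow> 'a \<Rightarrow> real" where
  "kriging \<Psi> xs f x = scalar_prod (kvec \<Psi> xs x) (kinv \<Psi> xs *\<^sub>v obsvec f xs)"

definition std_normal_cdf :: "real \<Rightarrow> real" where
  "std_normal_cdf x = (LBINT t:{..x}. std_normal_density t)"

definition std_normal_quantile :: "real \<Rightarrow> real" where
  "std_normal_quantile p = (THE q. std_normal_cdf q = p)"

definition ci_length :: "real \<Rightarrow> ('a::real_normed_vector \<Rightarrow> real) \<Rightarrow> 'a list \<Rightarrow> ('a \<Rightarrow> real) \<Rightarrow> 'a \<Rightarrow> real" where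
  "ci_length \<beta> \<Psi> xs f x =
     2 * std_normal_quantile (1 - \<beta> / 2) *
     sqrt (scalar_prod (obsvec f xs) (kinv \<Psi> xs *\<^sub>v obsvec f xs) *
           (1 - scalar_prod (kvec \<Psi> xs x) (kinv \<Psi> xs *\<^sub>v kvec \<Psi> xs x)))"

definition fill_distance :: "'a::metric_space set \<Rightarrow> 'a list \<Rightarrow> real" where
  "fill_distance \<Omega> xs = (SUP x\<in>\<Omega>. infdist x (set xs))"

definition sampling_scheme :: "'a::metric_space set \<Rightarrow> (nat \<Rightarrow> 'a list) \<Rightarrow> bool" where
  "sampling_scheme \<Omega> X = (\<forall>n. distinct (X n) \<and> length (X n) = n \<and> set (X n) \<subseteq> \<Omega>)"

definition fill_distance_condition :: "nat \<Rightarrow> 'a::metric_space set \<Rightarrow> (nat \<Rightarrow> 'a list) \<Rightarrow> bool" where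
  "fill_distance_condition d \<Omega> X = (\<exists>c1 c2. 0 < c1 \<and> 0 < c2 \<and>
     (\<forall>n\<ge>1. c1 * real n powr (- 1 / real d) \<le> fill_distance \<Omega> (X n) \<and>
             fill_distance \<Omega> (X n) \<le> c2 * real n powr (- 1 / real d)))"

end

theory Submission
  imports Defs "Jordan_Normal_Form.Determinant"
begin

(*
  Since f = T v, the prediction error f x - f_n x is the integral of the conditional covariance
  Psi (x - y) - r(x)^T R^-1 r(y) against v. This covariance is positive semidefinite, so by
  Cauchy-Schwarz the error is at most sqrt (1 - r(x)^T R^-1 r(x)) * ||v||_1, and this square root
  is exactly the x-dependent factor of the interval width. The other factor sqrt (Y^T R^-1 Y)
  dominates |f_n x0|, hence is at least |f x0| / 2 as soon as the design is dense enough to make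
  the error at a point x0 with f x0 \<noteq> 0 small; this only needs continuity of Psi at 0.
  The Matern kernel is strictly positive definite because it is a Gamma mixture of Gaussian
  kernels, whose kernel forms are series of sums of squares of monomial moments.
*)

section \<open>Inverses of positive semidefinite matrices\<close>

lemma nonneg_quadratic_discriminant:
  fixes a b c :: real
  assumes nonneg: "\<And>t. 0 \<le> a + 2 * t * b + t\<^sup>2 * c"
  shows "b\<^sup>2 \<le> a * c" and "0 \<le> a" and "0 \<le> c"
proof -
  show a: "0 \<le> a" using nonneg[of 0] by simp
  show c: "0 \<le> c"
  proof (rule ccontr)
    assume "\<not> 0 \<le> c"
    define t where "t = sqrt ((a + 1) / - c)"
    have "t\<^sup>2 * c = - (a + 1)" using a \<open>\<not> 0 \<le> c\<close> by (simp add: t_def divide_nonneg_neg)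
    moreover have "0 \<le> a + t\<^sup>2 * c" using nonneg[of t] nonneg[of "- t"] by simp
    ultimately show False by simp
  qed
  show "b\<^sup>2 \<le> a * c"
  proof (cases "c = 0")
    case True
    have "b = 0"
    proof (rule ccontr)
      assume "b \<noteq> 0"
      have "0 \<le> a + 2 * (- (a + 1) / (2 * b)) * b" using nonneg[of "- (a + 1) / (2 * b)"] True by simp
      with \<open>b \<noteq> 0\<close> show False by (simp add: field_simps)
    qed
    with True show ?thesis by simp
  next
    case False
    with c have "0 < c" by simp
    have "0 \<le> a + 2 * (- b / c) * b + (- b / c)\<^sup>2 * c" by (rule nonneg)
    with \<open>0 < c\<close> show ?thesis by (simp add: field_simps power2_eq_square)
  qed
qed

locale psd_inverse =
  fixes n :: nat and R B :: "nat \<Rightarrow> nat \<Rightarrow> real"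
  assumes R_sym: "\<And>j k. R j k = R k j"
    and R_B_inverse: "\<And>j k. j < n \<Longrightarrow> k < n \<Longrightarrow> (\<Sum>l<n. R j l * B l k) = of_bool (j = k)"
    and B_R_inverse: "\<And>j k. j < n \<Longrightarrow> k < n \<Longrightarrow> (\<Sum>l<n. B j l * R l k) = of_bool (j = k)"
    and R_psd: "\<And>c. 0 \<le> (\<Sum>j<n. \<Sum>k<n. c j * c k * R j k)"
begin

definition quad_form :: "(nat \<Rightarrow> real) \<Rightarrow> real" where
  "quad_form c = (\<Sum>j<n. \<Sum>k<n. c j * c k * R j k)"

definition inv_form :: "(nat \<Rightarrow> real) \<Rightarrow> (nat \<Rightarrow> real) \<Rightarrow> real" where
  "inv_form g h = (\<Sum>j<n. \<Sum>k<n. g j * B j k * h k)"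

definition inv_mult :: "(nat \<Rightarrow> real) \<Rightarrow> nat \<Rightarrow> real" where
  "inv_mult g j = (\<Sum>k<n. B j k * g k)"

lemma B_sym:
  assumes "j < n" "k < n" shows "B j k = B k j"
proof -
  have "B j k = (\<Sum>l<n. B j l * of_bool (l = k))"
    using assms by simp
  also have "\<dots> = (\<Sum>l<n. B j l * (\<Sum>m<n. B k m * R m l))"
    using assms by (intro sum.cong refl) (simp add: B_R_inverse eq_commute)
  also have "\<dots> = (\<Sum>m<n. (\<Sum>l<n. B j l * R l m) * B k m)"
    by (simp only: sum_distrib_left sum_distrib_right, subst sum.swap)
       (intro sum.cong refl, simp add: R_sym mult_ac)
  also have "\<dots> = B k j"
    using assms by (simp add: B_R_inverse)
  finally show ?thesis .
qed

lemma R_inv_mult: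
  assumes "j < n" shows "(\<Sum>k<n. R j k * inv_mult g k) = g j"
proof -
  have "(\<Sum>k<n. R j k * inv_mult g k) = (\<Sum>l<n. (\<Sum>k<n. R j k * B k l) * g l)"
    unfolding inv_mult_def
    by (simp only: sum_distrib_left sum_distrib_right, subst sum.swap) (simp add: mult_ac)
  also have "\<dots> = g j"
    using assms by (simp add: R_B_inverse)
  finally show ?thesis .
qed

lemma quad_form_eq: "quad_form c = (\<Sum>j<n. c j * (\<Sum>k<n. R j k * c k))"
  unfolding quad_form_def by (simp add: sum_distrib_left mult_ac)

lemma inv_mult_sum: "(\<Sum>j<n. inv_mult g j * h j) = inv_form h g"
  unfolding inv_mult_def inv_form_def by (simp add: sum_distrib_left sum_distrib_right mult_ac)

lemma quad_form_inv_mult: "quad_form (inv_mult g) = inv_form g g"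
proof -
  have "quad_form (inv_mult g) = (\<Sum>j<n. inv_mult g j * g j)"
    unfolding quad_form_eq by (intro sum.cong refl) (simp add: R_inv_mult)
  then show ?thesis by (simp add: inv_mult_sum)
qed

lemma inv_form_nonneg: "0 \<le> inv_form g g"
  using R_psd[of "inv_mult g"] by (simp add: quad_form_inv_mult[symmetric] quad_form_def)

lemma inv_form_commute: "inv_form g h = inv_form h g"
  unfolding inv_form_def
  by (subst sum.swap) (intro sum.cong refl, simp add: B_sym mult_ac)

lemma inv_form_add_scaled_left: "inv_form (\<lambda>j. g j + t * h j) w = inv_form g w + t * inv_form h w"
  unfolding inv_form_def by (simp add: algebra_simps sum.distrib sum_distrib_left)

lemma inv_form_add_scaled_right: "inv_form w (\<lambda>j. g j + t * h j) = inv_form w g + t * inv_form w h"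
  unfolding inv_form_def by (simp add: algebra_simps sum.distrib sum_distrib_left)

lemma inv_form_Cauchy_Schwarz: "(inv_form g h)\<^sup>2 \<le> inv_form g g * inv_form h h"
proof (rule nonneg_quadratic_discriminant(1))
  fix t
  have "0 \<le> inv_form (\<lambda>j. g j + t * h j) (\<lambda>j. g j + t * h j)"
    by (rule inv_form_nonneg)
  also have "\<dots> = inv_form g g + 2 * t * inv_form g h + t\<^sup>2 * inv_form h h"
    by (simp add: inv_form_add_scaled_left inv_form_add_scaled_right inv_form_commute[of h g]
        algebra_simps power2_eq_square)
  finally show "0 \<le> inv_form g g + 2 * t * inv_form g h + t\<^sup>2 * inv_form h h" .
qed

lemma quad_form_Cauchy_Schwarz: "(\<Sum>j<n. c j * g j)\<^sup>2 \<le> quad_form c * inv_form g g"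
proof -
  have "0 \<le> quad_form c + 2 * t * (- (\<Sum>j<n. c j * g j)) + t\<^sup>2 * inv_form g g" for t
  proof -
    have "0 \<le> quad_form (\<lambda>j. c j - t * inv_mult g j)"
      using R_psd unfolding quad_form_def .
    also have "quad_form (\<lambda>j. c j - t * inv_mult g j)
        = quad_form c - 2 * t * (\<Sum>j<n. c j * (\<Sum>k<n. R j k * inv_mult g k)) + t\<^sup>2 * quad_form (inv_mult g)"
      unfolding quad_form_def
      apply (simp add: algebra_simps sum.distrib sum_subtractf sum_distrib_left power2_eq_square)
      apply (subst (2) sum.swap)
      apply (simp add: R_sym algebra_simps sum.distrib sum_distrib_left)
      done
    finally show ?thesis
      by (simp add: R_inv_mult quad_form_inv_mult)
  qed
  from nonneg_quadratic_discriminant(1)[OF this] show ?thesis by simp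
qed

lemma coord_le_inv_form:
  assumes "k < n" and "R k k = 1" shows "(g k)\<^sup>2 \<le> inv_form g g"
proof -
  have "{..<n} \<inter> {j. j = k} = {k}"
    using assms(1) by auto
  then show ?thesis
    using quad_form_Cauchy_Schwarz[of "\<lambda>j. of_bool (j = k)" g] assms(2) by (simp add: quad_form_eq)
qed

lemma Schur_complement_psd:
  assumes bordered_psd: "\<And>u \<alpha> \<beta>. 0 \<le> quad_form u - 2 * \<alpha> * (\<Sum>j<n. u j * rx j)
      - 2 * \<beta> * (\<Sum>j<n. u j * ry j) + \<alpha>\<^sup>2 + 2 * \<alpha> * \<beta> * kxy + \<beta>\<^sup>2"
  shows "(kxy - inv_form rx ry)\<^sup>2 \<le> (1 - inv_form rx rx) * (1 - inv_form ry ry)"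
    and "0 \<le> 1 - inv_form rx rx"
proof -
  have "0 \<le> (1 - inv_form rx rx) + 2 * t * (kxy - inv_form rx ry) + t\<^sup>2 * (1 - inv_form ry ry)" for t
  proof -
    define g where "g = (\<lambda>j. rx j + t * ry j)"
    have "0 \<le> inv_form g g - 2 * inv_form rx g - 2 * t * inv_form ry g + 1 + 2 * t * kxy + t\<^sup>2"
      using bordered_psd[of "inv_mult g" 1 t] unfolding quad_form_inv_mult inv_mult_sum by simp
    moreover have "inv_form g g = inv_form rx rx + 2 * t * inv_form rx ry + t\<^sup>2 * inv_form ry ry"
      by (simp add: g_def inv_form_add_scaled_left inv_form_add_scaled_right
          inv_form_commute[of ry rx] algebra_simps power2_eq_square)
    moreover have "inv_form rx g = inv_form rx rx + t * inv_form rx ry"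
      and "inv_form ry g = inv_form rx ry + t * inv_form ry ry"
      by (simp_all add: g_def inv_form_add_scaled_right inv_form_commute[of ry rx])
    ultimately show ?thesis
      by (simp add: algebra_simps power2_eq_square)
  qed
  from nonneg_quadratic_discriminant[OF this]
  show "(kxy - inv_form rx ry)\<^sup>2 \<le> (1 - inv_form rx rx) * (1 - inv_form ry ry)"
    and "0 \<le> 1 - inv_form rx rx" by auto
qed

end

section \<open>Kriging with a strictly positive definite kernel\<close>

definition kernel_form :: "('a::real_normed_vector \<Rightarrow> real) \<Rightarrow> 'a list \<Rightarrow> (nat \<Rightarrow> real) \<Rightarrow> real" where
  "kernel_form \<Psi> zs c = (\<Sum>j<length zs. \<Sum>k<length zs. c j * c k * \<Psi> (zs ! j - zs ! k))"

definition cond_cov :: "('a::real_normed_vector \<Rightarrow> real) \<Rightarrow> 'a list \<Rightarrow> 'a \<Rightarrow> 'a \<Rightarrow> real" where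
  "cond_cov \<Psi> xs x y = \<Psi> (x - y) - scalar_prod (kvec \<Psi> xs x) (kinv \<Psi> xs *\<^sub>v kvec \<Psi> xs y)"

definition variance_estimate :: "('a::real_normed_vector \<Rightarrow> real) \<Rightarrow> 'a list \<Rightarrow> ('a \<Rightarrow> real) \<Rightarrow> real" where
  "variance_estimate \<Psi> xs f = scalar_prod (obsvec f xs) (kinv \<Psi> xs *\<^sub>v obsvec f xs)"

locale pd_kernel =
  fixes \<Psi> :: "'a::euclidean_space \<Rightarrow> real"
  assumes kernel_form_nonneg: "\<And>zs c. 0 \<le> kernel_form \<Psi> zs c"
    and kernel_form_pos: "\<And>zs c. distinct zs \<Longrightarrow> \<exists>j<length zs. c j \<noteq> 0 \<Longrightarrow> 0 < kernel_form \<Psi> zs c"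
    and kernel_sym: "\<And>h. \<Psi> (- h) = \<Psi> h"
    and kernel_0: "\<Psi> 0 = 1"
    and isCont_kernel_0: "isCont \<Psi> 0"
    and kernel_measurable: "\<Psi> \<in> borel_measurable borel"
begin

lemma kernel_commute: "\<Psi> (x - y) = \<Psi> (y - x)"
  using kernel_sym[of "y - x"] by simp

lemma kernel_form_bordered:
  "0 \<le> (\<Sum>j<length xs. \<Sum>k<length xs. u j * u k * \<Psi> (xs ! j - xs ! k))
      - 2 * \<alpha> * (\<Sum>j<length xs. u j * \<Psi> (x - xs ! j)) - 2 * \<beta> * (\<Sum>j<length xs. u j * \<Psi> (y - xs ! j))
      + \<alpha>\<^sup>2 + 2 * \<alpha> * \<beta> * \<Psi> (x - y) + \<beta>\<^sup>2"
proof -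
  define n where "n = length xs"
  define c where "c j = (if j < n then - u j else if j = n then \<alpha> else \<beta>)" for j
  have swap: "\<Psi> (xs ! j - z) = \<Psi> (z - xs ! j)" for j z
    by (rule kernel_commute)
  have "kernel_form \<Psi> (xs @ [x, y]) c
      = (\<Sum>j<n. \<Sum>k<n. u j * u k * \<Psi> (xs ! j - xs ! k))
        - 2 * \<alpha> * (\<Sum>j<n. u j * \<Psi> (x - xs ! j)) - 2 * \<beta> * (\<Sum>j<n. u j * \<Psi> (y - xs ! j))
        + \<alpha>\<^sup>2 + 2 * \<alpha> * \<beta> * \<Psi> (x - y) + \<beta>\<^sup>2"
    unfolding kernel_form_def n_def[symmetric]
    by (simp add: sum.distrib nth_append c_def n_def[symmetric] kernel_0 swap[of _ x] swap[of _ y] kernel_commute[of y x]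
        sum_negf sum_subtractf sum_distrib_left algebra_simps power2_eq_square)
  with kernel_form_nonneg[of "xs @ [x, y]" c] show ?thesis
    by (simp add: n_def)
qed

lemma abs_kernel_le_1: "\<bar>\<Psi> h\<bar> \<le> 1"
proof -
  have "0 \<le> \<alpha>\<^sup>2 + 2 * \<alpha> * \<beta> * \<Psi> h + \<beta>\<^sup>2" for \<alpha> \<beta>
    using kernel_form_bordered[where xs="[]" and x=h and y=0] by simp
  from this[of 1 1] this[of 1 "- 1"] show ?thesis by simp
qed

lemma integrable_kernel_mult:
  assumes "integrable (lebesgue_on \<Omega>) v"
  shows "integrable (lebesgue_on \<Omega>) (\<lambda>y. \<Psi> (z - y) * v y)"
proof (rule Bochner_Integration.integrable_bound[OF integrable_norm[OF assms]])
  have "(\<lambda>y. \<Psi> (z - y)) \<in> borel_measurable lebesgue"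
    by (intro measurable_completion measurable_compose[OF _ kernel_measurable]) simp
  then have "(\<lambda>y. \<Psi> (z - y)) \<in> borel_measurable (lebesgue_on \<Omega>)"
    by (rule measurable_restrict_space1)
  then show "(\<lambda>y. \<Psi> (z - y) * v y) \<in> borel_measurable (lebesgue_on \<Omega>)"
    using borel_measurable_integrable[OF assms] by (rule borel_measurable_times)
  show "AE y in lebesgue_on \<Omega>. norm (\<Psi> (z - y) * v y) \<le> norm (norm (v y))"
    using abs_kernel_le_1 by (intro AE_I2) (simp add: abs_mult mult_left_le_one_le)
qed

lemma kernel_matrix_invertible:
  assumes "distinct xs"
  shows "mat_inverse (kmat \<Psi> xs) \<noteq> None"
proof
  define n where "n = length xs"
  have R: "kmat \<Psi> xs \<in> carrier_mat n n" by (simp add: kmat_def n_def)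
  assume "mat_inverse (kmat \<Psi> xs) = None"
  then have "kmat \<Psi> xs \<notin> Units (ring_mat TYPE(real) n ())"
    by (rule mat_inverse(1)[OF R])
  then have "Determinant.det (kmat \<Psi> xs) = 0"
    using det_non_zero_imp_unit[OF R] by metis
  then obtain w where w: "w \<in> carrier_vec n" "w \<noteq> 0\<^sub>v n" "kmat \<Psi> xs *\<^sub>v w = 0\<^sub>v n"
    using det_0_iff_vec_prod_zero[OF R] by blast
  have "\<exists>j<length xs. w $ j \<noteq> 0"
    using w(1,2) by (auto simp: n_def intro: eq_vecI)
  then have "0 < kernel_form \<Psi> xs (\<lambda>j. w $ j)"
    by (rule kernel_form_pos[OF assms])
  also have "kernel_form \<Psi> xs (\<lambda>j. w $ j) = (\<Sum>j<n. w $ j * (kmat \<Psi> xs *\<^sub>v w) $ j)"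
    using w(1) by (simp add: kernel_form_def kmat_def n_def scalar_prod_def atLeast0LessThan
        sum_distrib_left mult_ac)
  finally show False
    using w(3) by simp
qed

lemma psd_inverse_kinv:
  assumes "distinct xs"
  shows "psd_inverse (length xs) (\<lambda>j k. \<Psi> (xs ! j - xs ! k)) (\<lambda>j k. kinv \<Psi> xs $$ (j, k))"
proof -
  define n where "n = length xs"
  have R: "kmat \<Psi> xs \<in> carrier_mat n n" by (simp add: kmat_def n_def)
  obtain B where "mat_inverse (kmat \<Psi> xs) = Some B"
    using kernel_matrix_invertible[OF assms] by blast
  with mat_inverse(2)[OF R] have RB: "kmat \<Psi> xs * B = 1\<^sub>m n" and BR: "B * kmat \<Psi> xs = 1\<^sub>m n"
    and B: "B \<in> carrier_mat n n" and kinv: "kinv \<Psi> xs = B"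
    by (auto simp: kinv_def)
  show ?thesis
    unfolding kinv n_def[symmetric]
  proof
    show "\<Psi> (xs ! j - xs ! k) = \<Psi> (xs ! k - xs ! j)" for j k
      by (rule kernel_commute)
    show "(\<Sum>l<n. \<Psi> (xs ! j - xs ! l) * B $$ (l, k)) = of_bool (j = k)" if "j < n" "k < n" for j k
      using arg_cong[OF RB, of "\<lambda>M. M $$ (j, k)"] that R B
      by (simp add: kmat_def n_def scalar_prod_def atLeast0LessThan)
    show "(\<Sum>l<n. B $$ (j, l) * \<Psi> (xs ! l - xs ! k)) = of_bool (j = k)" if "j < n" "k < n" for j k
      using arg_cong[OF BR, of "\<lambda>M. M $$ (j, k)"] that R B
      by (simp add: kmat_def n_def scalar_prod_def atLeast0LessThan)
    show "0 \<le> (\<Sum>j<n. \<Sum>k<n. c j * c k * \<Psi> (xs ! j - xs ! k))" for c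
      using kernel_form_nonneg[of xs c] by (simp add: kernel_form_def n_def)
  qed
qed

end

locale kriging_design = pd_kernel \<Psi> for \<Psi> :: "'a::euclidean_space \<Rightarrow> real" +
  fixes xs :: "'a list"
  assumes design_distinct: "distinct xs"
begin

sublocale psd_inverse "length xs" "\<lambda>j k. \<Psi> (xs ! j - xs ! k)" "\<lambda>j k. kinv \<Psi> xs $$ (j, k)"
  by (rule psd_inverse_kinv[OF design_distinct])

lemma scalar_prod_kinv:
  "scalar_prod (vec (length xs) g) (kinv \<Psi> xs *\<^sub>v vec (length xs) h) = inv_form g h"
proof -
  obtain B where "mat_inverse (kmat \<Psi> xs) = Some B"
    using kernel_matrix_invertible[OF design_distinct] by blast
  then have "kinv \<Psi> xs \<in> carrier_mat (length xs) (length xs)"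
    using mat_inverse(2)[of "kmat \<Psi> xs" "length xs"] by (auto simp: kinv_def kmat_def)
  then show ?thesis
    by (simp add: inv_form_def scalar_prod_def atLeast0LessThan sum_distrib_left mult_ac)
qed

lemma cond_cov_eq: "cond_cov \<Psi> xs x y = \<Psi> (x - y) - inv_form (\<lambda>j. \<Psi> (x - xs ! j)) (\<lambda>j. \<Psi> (y - xs ! j))"
  by (simp add: cond_cov_def kvec_def scalar_prod_kinv)

lemma kriging_eq: "kriging \<Psi> xs f x = inv_form (\<lambda>j. \<Psi> (x - xs ! j)) (\<lambda>k. f (xs ! k))"
  by (simp add: kriging_def kvec_def obsvec_def scalar_prod_kinv)

lemma variance_estimate_eq: "variance_estimate \<Psi> xs f = inv_form (\<lambda>k. f (xs ! k)) (\<lambda>k. f (xs ! k))"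
  by (simp add: variance_estimate_def obsvec_def scalar_prod_kinv)

lemma quad_form_bordered:
  "0 \<le> quad_form u - 2 * \<alpha> * (\<Sum>j<length xs. u j * \<Psi> (x - xs ! j))
      - 2 * \<beta> * (\<Sum>j<length xs. u j * \<Psi> (y - xs ! j)) + \<alpha>\<^sup>2 + 2 * \<alpha> * \<beta> * \<Psi> (x - y) + \<beta>\<^sup>2"
  unfolding quad_form_def by (rule kernel_form_bordered)

lemma
  shows cond_cov_Cauchy_Schwarz: "(cond_cov \<Psi> xs x y)\<^sup>2 \<le> cond_cov \<Psi> xs x x * cond_cov \<Psi> xs y y"
    and cond_cov_nonneg: "0 \<le> cond_cov \<Psi> xs x x"
  using Schur_complement_psd[OF quad_form_bordered[where x=x and y=y]]
  by (simp_all add: cond_cov_eq kernel_0)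

lemma cond_cov_le_1: "cond_cov \<Psi> xs x x \<le> 1"
  using inv_form_nonneg by (simp add: cond_cov_eq kernel_0)

lemma cond_cov_le_design_point:
  assumes "k < length xs"
  shows "cond_cov \<Psi> xs x x \<le> 1 - (\<Psi> (x - xs ! k))\<^sup>2"
  using coord_le_inv_form[OF assms, of "\<lambda>j. \<Psi> (x - xs ! j)"] by (simp add: cond_cov_eq kernel_0)

lemma abs_cond_cov_le: "\<bar>cond_cov \<Psi> xs x y\<bar> \<le> sqrt (cond_cov \<Psi> xs x x)"
proof -
  have "(cond_cov \<Psi> xs x y)\<^sup>2 \<le> cond_cov \<Psi> xs x x * 1"
    using cond_cov_Cauchy_Schwarz[of x y] cond_cov_le_1[of y] cond_cov_nonneg[of x]
    by (meson mult_left_mono order_trans)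
  then show ?thesis
    by (simp add: real_le_rsqrt)
qed

lemma variance_estimate_nonneg: "0 \<le> variance_estimate \<Psi> xs f"
  by (simp add: variance_estimate_eq inv_form_nonneg)

lemma abs_kriging_le: "\<bar>kriging \<Psi> xs f x\<bar> \<le> sqrt (variance_estimate \<Psi> xs f)"
proof -
  have "(kriging \<Psi> xs f x)\<^sup>2 \<le> (1 - cond_cov \<Psi> xs x x) * variance_estimate \<Psi> xs f"
    using inv_form_Cauchy_Schwarz by (simp add: kriging_eq variance_estimate_eq cond_cov_eq kernel_0)
  also have "\<dots> \<le> variance_estimate \<Psi> xs f"
    using cond_cov_nonneg[of x] cond_cov_le_1[of x] variance_estimate_nonneg[of f]
    by (intro mult_left_le_one_le) auto
  finally show ?thesis
    by (simp add: real_le_rsqrt)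
qed

lemma
  assumes v: "integrable (lebesgue_on \<Omega>) v"
  shows integrable_cond_cov_mult: "integrable (lebesgue_on \<Omega>) (\<lambda>y. cond_cov \<Psi> xs x y * v y)"
    and kernel_op_minus_kriging: "kernel_op \<Psi> \<Omega> v x - kriging \<Psi> xs (kernel_op \<Psi> \<Omega> v) x
      = (\<integral>y. cond_cov \<Psi> xs x y * v y \<partial>lebesgue_on \<Omega>)"
proof -
  let ?M = "lebesgue_on \<Omega>" and ?B = "\<lambda>j k. kinv \<Psi> xs $$ (j, k)" and ?n = "length xs"
  define g where "g y = (\<Sum>j<?n. \<Sum>k<?n. \<Psi> (x - xs ! j) * ?B j k * (\<Psi> (xs ! k - y) * v y))" for y
  note int = integrable_kernel_mult[OF v]
  have g_int: "integrable ?M g"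
    unfolding g_def by (intro Bochner_Integration.integrable_sum Bochner_Integration.integrable_mult_right int)
  let ?inv = "\<lambda>y. inv_form (\<lambda>j. \<Psi> (x - xs ! j)) (\<lambda>j. \<Psi> (y - xs ! j)) * v y"
  have g_eq: "g = ?inv"
    by (rule ext) (simp add: g_def inv_form_def sum_distrib_left mult_ac kernel_commute[of "xs ! _"])
  have inv_int: "integrable ?M ?inv"
    using g_int by (simp only: g_eq)
  show "integrable ?M (\<lambda>y. cond_cov \<Psi> xs x y * v y)"
    unfolding cond_cov_eq left_diff_distrib by (intro Bochner_Integration.integrable_diff int inv_int)
  have "kriging \<Psi> xs (kernel_op \<Psi> \<Omega> v) x = integral\<^sup>L ?M g"
    unfolding g_def
    by (subst Bochner_Integration.integral_sum, (intro Bochner_Integration.integrable_sum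
          Bochner_Integration.integrable_mult_right int)+,
        subst Bochner_Integration.integral_sum, (intro Bochner_Integration.integrable_mult_right int)+)
       (simp add: kriging_eq inv_form_def kernel_op_def)
  then show "kernel_op \<Psi> \<Omega> v x - kriging \<Psi> xs (kernel_op \<Psi> \<Omega> v) x
      = (\<integral>y. cond_cov \<Psi> xs x y * v y \<partial>?M)"
    unfolding cond_cov_eq left_diff_distrib g_eq kernel_op_def
    by (simp add: Bochner_Integration.integral_diff[OF int[of x] inv_int])
qed

lemma kriging_error_le:
  assumes v: "integrable (lebesgue_on \<Omega>) v"
  shows "\<bar>kernel_op \<Psi> \<Omega> v x - kriging \<Psi> xs (kernel_op \<Psi> \<Omega> v) x\<bar>
      \<le> sqrt (cond_cov \<Psi> xs x x) * (\<integral>y. \<bar>v y\<bar> \<partial>lebesgue_on \<Omega>)"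
proof -
  have "\<bar>\<integral>y. cond_cov \<Psi> xs x y * v y \<partial>lebesgue_on \<Omega>\<bar>
      \<le> (\<integral>y. \<bar>cond_cov \<Psi> xs x y * v y\<bar> \<partial>lebesgue_on \<Omega>)"
    by (rule integral_abs_bound)
  also have "\<dots> \<le> (\<integral>y. sqrt (cond_cov \<Psi> xs x x) * \<bar>v y\<bar> \<partial>lebesgue_on \<Omega>)"
  proof (rule integral_mono)
    show "integrable (lebesgue_on \<Omega>) (\<lambda>y. \<bar>cond_cov \<Psi> xs x y * v y\<bar>)"
      using integrable_cond_cov_mult[OF v] by (rule integrable_abs)
    show "integrable (lebesgue_on \<Omega>) (\<lambda>y. sqrt (cond_cov \<Psi> xs x x) * \<bar>v y\<bar>)"
      using v by (intro Bochner_Integration.integrable_mult_right integrable_abs)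
    show "\<bar>cond_cov \<Psi> xs x y * v y\<bar> \<le> sqrt (cond_cov \<Psi> xs x x) * \<bar>v y\<bar>" for y
      unfolding abs_mult using abs_cond_cov_le by (rule mult_right_mono) simp
  qed
  finally show ?thesis
    by (simp add: kernel_op_minus_kriging[OF v])
qed

end

lemma infdist_le_fill_distance:
  fixes \<Omega> :: "'a::metric_space set"
  assumes "bounded \<Omega>" and "set xs \<subseteq> \<Omega>" and "x \<in> \<Omega>"
  shows "infdist x (set xs) \<le> fill_distance \<Omega> xs"
proof -
  obtain e where e: "\<And>y. y \<in> \<Omega> \<Longrightarrow> dist (hd xs) y \<le> e"
    using assms(1) bounded_any_center by metis
  have "infdist y (set xs) \<le> max 0 e" if "y \<in> \<Omega>" for y
  proof (cases "xs = []")
    case False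
    then have "infdist y (set xs) \<le> dist y (hd xs)"
      by (intro infdist_le) simp
    with e[OF that] show ?thesis
      by (simp add: dist_commute)
  qed (simp add: infdist_def)
  then have "bdd_above ((\<lambda>y. infdist y (set xs)) ` \<Omega>)"
    by (meson bdd_aboveI2)
  with assms(3) show ?thesis
    unfolding fill_distance_def by (rule cSUP_upper)
qed

lemma design_point_within_fill_distance:
  fixes \<Omega> :: "'a::metric_space set"
  assumes "bounded \<Omega>" and "set xs \<subseteq> \<Omega>" and "xs \<noteq> []" and "x \<in> \<Omega>"
  obtains k where "k < length xs" and "dist x (xs ! k) \<le> fill_distance \<Omega> xs"
proof -
  obtain y where "y \<in> set xs" and y_min: "\<And>z. z \<in> set xs \<Longrightarrow> dist x y \<le> dist x z"
    using arg_min_if_finite[of "set xs" "dist x"] assms(3) by (metis finite_set not_le set_empty)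
  then have "dist x y \<le> infdist x (set xs)"
    unfolding infdist_notempty[OF \<open>y \<in> set xs\<close>[THEN ex_in_conv[THEN iffD1, OF exI]]]
    by (intro cINF_greatest) auto
  with infdist_le_fill_distance[OF assms(1,2,4)] \<open>y \<in> set xs\<close> that show ?thesis
    by (metis in_set_conv_nth order_trans)
qed

lemma sampling_scheme_eventually_fine:
  assumes "sampling_scheme \<Omega> X" and "fill_distance_condition d \<Omega> X" and "0 < d" and "0 < \<delta>"
  shows "eventually (\<lambda>n. distinct (X n) \<and> X n \<noteq> [] \<and> set (X n) \<subseteq> \<Omega> \<and> fill_distance \<Omega> (X n) < \<delta>)
    sequentially"
proof -
  obtain c where upper: "\<And>n. 1 \<le> n \<Longrightarrow> fill_distance \<Omega> (X n) \<le> c * real n powr (- 1 / real d)"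
    using assms(2) unfolding fill_distance_condition_def by blast
  have "(\<lambda>n. c * real n powr (- 1 / real d)) \<longlonglongrightarrow> c * 0"
    using assms(3) by (intro tendsto_mult tendsto_const tendsto_neg_powr filterlim_real_sequentially) auto
  then have "eventually (\<lambda>n. c * real n powr (- 1 / real d) < \<delta>) sequentially"
    using assms(4) by (simp add: order_tendstoD(2))
  with eventually_ge_at_top[of 1] show ?thesis
  proof eventually_elim
    case (elim n)
    moreover have "distinct (X n)" "length (X n) = n" "set (X n) \<subseteq> \<Omega>"
      using assms(1) by (simp_all add: sampling_scheme_def)
    ultimately show ?case
      using upper[of n] by auto
  qed
qed

lemma abs_divide_ci_length_le:
  fixes e q s p L m :: real
  assumes e: "\<bar>e\<bar> \<le> sqrt p * L" and "0 \<le> p" and "0 \<le> L" and "0 < m" and "m \<le> sqrt s"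
  shows "\<bar>e / (2 * q * sqrt (s * p))\<bar> \<le> L / (2 * \<bar>q\<bar> * m)"
proof (cases "p = 0 \<or> q = 0")
  case True
  with e assms(3,4) show ?thesis by auto
next
  case False
  with assms(2) have "0 < sqrt p" and "q \<noteq> 0" by auto
  have "0 < sqrt s" using assms(4,5) by linarith
  have "\<bar>e\<bar> / (2 * \<bar>q\<bar> * sqrt s * sqrt p) \<le> (sqrt p * L) / (2 * \<bar>q\<bar> * m * sqrt p)"
    using e assms(3-5) \<open>0 < sqrt p\<close> \<open>q \<noteq> 0\<close> by (intro frac_le) auto
  with \<open>0 < sqrt p\<close> \<open>0 < sqrt s\<close> show ?thesis
    by (simp add: abs_mult real_sqrt_mult abs_divide mult_ac)
qed

context kriging_design
begin

lemma abs_kriging_error_div_ci_length_le: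
  assumes v: "integrable (lebesgue_on \<Omega>) v"
    and "0 < m" and "m \<le> sqrt (variance_estimate \<Psi> xs (kernel_op \<Psi> \<Omega> v))"
  shows "\<bar>(kernel_op \<Psi> \<Omega> v x - kriging \<Psi> xs (kernel_op \<Psi> \<Omega> v) x) / ci_length \<beta> \<Psi> xs (kernel_op \<Psi> \<Omega> v) x\<bar>
      \<le> (\<integral>y. \<bar>v y\<bar> \<partial>lebesgue_on \<Omega>) / (2 * \<bar>std_normal_quantile (1 - \<beta> / 2)\<bar> * m)"
  using abs_divide_ci_length_le[OF kriging_error_le[OF v] cond_cov_nonneg _ assms(2,3)]
  by (simp add: ci_length_def variance_estimate_def cond_cov_def kernel_0 Bochner_Integration.integral_nonneg)

end

context pd_kernel
begin

lemma kriging_error_over_ci_length_bounded: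
  assumes "bounded \<Omega>" and "x0 \<in> \<Omega>" and "kernel_op \<Psi> \<Omega> v x0 \<noteq> 0"
    and v: "integrable (lebesgue_on \<Omega>) v"
  obtains \<delta> where "0 < \<delta>"
    and "\<And>xs x. distinct xs \<Longrightarrow> xs \<noteq> [] \<Longrightarrow> set xs \<subseteq> \<Omega> \<Longrightarrow> fill_distance \<Omega> xs < \<delta> \<Longrightarrow>
      \<bar>(kernel_op \<Psi> \<Omega> v x - kriging \<Psi> xs (kernel_op \<Psi> \<Omega> v) x) / ci_length \<beta> \<Psi> xs (kernel_op \<Psi> \<Omega> v) x\<bar>
        \<le> (\<integral>y. \<bar>v y\<bar> \<partial>lebesgue_on \<Omega>)
            / (\<bar>std_normal_quantile (1 - \<beta> / 2)\<bar> * \<bar>kernel_op \<Psi> \<Omega> v x0\<bar>)"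
proof -
  let ?f = "kernel_op \<Psi> \<Omega> v" and ?L = "\<integral>y. \<bar>v y\<bar> \<partial>lebesgue_on \<Omega>"
  define m where "m = \<bar>?f x0\<bar> / 2"
  have "0 \<le> ?L" and "0 < m"
    using assms(3) by (simp_all add: m_def Bochner_Integration.integral_nonneg)
  have "isCont (\<lambda>h. sqrt (1 - (\<Psi> h)\<^sup>2) * ?L) 0"
    using isCont_kernel_0 by (intro continuous_intros)
  then obtain \<delta> where "0 < \<delta>"
    and \<delta>: "\<And>h. dist h 0 < \<delta> \<Longrightarrow> dist (sqrt (1 - (\<Psi> h)\<^sup>2) * ?L) (sqrt (1 - (\<Psi> 0)\<^sup>2) * ?L) < m"
    using \<open>0 < m\<close> unfolding continuous_at_eps_delta by blast
  show ?thesis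
  proof (rule that[OF \<open>0 < \<delta>\<close>])
    fix xs x
    assume xs: "distinct xs" "xs \<noteq> []" "set xs \<subseteq> \<Omega>" "fill_distance \<Omega> xs < \<delta>"
    interpret kriging_design \<Psi> xs
      by (intro kriging_design.intro kriging_design_axioms.intro pd_kernel_axioms xs(1))
    obtain k where "k < length xs" and "dist x0 (xs ! k) \<le> fill_distance \<Omega> xs"
      by (rule design_point_within_fill_distance[OF assms(1) xs(3,2) assms(2)])
    have "sqrt (cond_cov \<Psi> xs x0 x0) * ?L \<le> sqrt (1 - (\<Psi> (x0 - xs ! k))\<^sup>2) * ?L"
      using cond_cov_le_design_point[OF \<open>k < length xs\<close>] \<open>0 \<le> ?L\<close>
      by (intro mult_right_mono real_sqrt_le_mono) simp_all
    also have "\<dots> < m"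
      using \<delta>[of "x0 - xs ! k"] \<open>dist x0 (xs ! k) \<le> fill_distance \<Omega> xs\<close> xs(4)
      by (simp add: dist_norm kernel_0)
    finally have "\<bar>?f x0 - kriging \<Psi> xs ?f x0\<bar> < m"
      using kriging_error_le[OF v, of x0] by linarith
    then have "m \<le> sqrt (variance_estimate \<Psi> xs ?f)"
      using abs_kriging_le[of ?f x0] unfolding m_def by linarith
    from abs_kriging_error_div_ci_length_le[OF v \<open>0 < m\<close> this, of x \<beta>]
    show "\<bar>(?f x - kriging \<Psi> xs ?f x) / ci_length \<beta> \<Psi> xs ?f x\<bar>
        \<le> ?L / (\<bar>std_normal_quantile (1 - \<beta> / 2)\<bar> * \<bar>?f x0\<bar>)"
      by (simp add: m_def)
  qed
qed

end

section \<open>Strict positive definiteness of Gaussian kernels\<close>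

definition basis_monomial :: "'a list \<Rightarrow> 'a::euclidean_space \<Rightarrow> real" where
  "basis_monomial L y = (\<Prod>b\<leftarrow>L. y \<bullet> b)"

lemma inner_power_eq_sum_PiE:
  fixes x y :: "'a::euclidean_space"
  shows "(x \<bullet> y) ^ m = (\<Sum>f\<in>PiE {..<m} (\<lambda>_. Basis). (\<Prod>l<m. x \<bullet> f l) * (\<Prod>l<m. y \<bullet> f l))"
proof -
  have "(x \<bullet> y) ^ m = (\<Prod>l<m. \<Sum>b\<in>Basis. (x \<bullet> b) * (y \<bullet> b))"
    by (simp add: euclidean_inner[of x y])
  also have "\<dots> = (\<Sum>f\<in>PiE {..<m} (\<lambda>_. Basis). \<Prod>l<m. (x \<bullet> f l) * (y \<bullet> f l))"
    by (rule prod_sum_PiE) auto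
  finally show ?thesis
    by (simp add: prod.distrib)
qed

lemma inner_power_form_eq_sum_squares:
  fixes p :: "nat \<Rightarrow> 'a::euclidean_space"
  shows "(\<Sum>j<n. \<Sum>k<n. d j * d k * (p j \<bullet> p k) ^ m)
     = (\<Sum>f\<in>PiE {..<m} (\<lambda>_. Basis). (\<Sum>j<n. d j * (\<Prod>l<m. p j \<bullet> f l))\<^sup>2)"
proof -
  have "(\<Sum>j<n. \<Sum>k<n. d j * d k * (p j \<bullet> p k) ^ m)
      = (\<Sum>j<n. \<Sum>k<n. \<Sum>f\<in>PiE {..<m} (\<lambda>_. Basis).
           (d j * (\<Prod>l<m. p j \<bullet> f l)) * (d k * (\<Prod>l<m. p k \<bullet> f l)))"
    by (simp add: inner_power_eq_sum_PiE sum_distrib_left mult_ac)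
  also have "\<dots> = (\<Sum>f\<in>PiE {..<m} (\<lambda>_. Basis). \<Sum>j<n. \<Sum>k<n.
           (d j * (\<Prod>l<m. p j \<bullet> f l)) * (d k * (\<Prod>l<m. p k \<bullet> f l)))"
    by (subst sum.swap, subst (2) sum.swap) (rule refl)
  finally show ?thesis
    by (simp add: power2_eq_square sum_product)
qed

lemma monomial_sum_eq_0_if_inner_power_form_eq_0:
  fixes p :: "nat \<Rightarrow> 'a::euclidean_space"
  assumes "(\<Sum>j<n. \<Sum>k<n. d j * d k * (p j \<bullet> p k) ^ length L) = 0" and "set L \<subseteq> Basis"
  shows "(\<Sum>j<n. d j * basis_monomial L (p j)) = 0"
proof -
  define f where "f l = (if l < length L then L ! l else undefined)" for l
  have f: "f \<in> PiE {..<length L} (\<lambda>_. Basis)"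
    using assms(2) by (auto simp: f_def PiE_def extensional_def)
  have "\<forall>g\<in>PiE {..<length L} (\<lambda>_. Basis). (\<Sum>j<n. d j * (\<Prod>l<length L. p j \<bullet> g l))\<^sup>2 = 0"
    using assms(1) unfolding inner_power_form_eq_sum_squares
    by (subst (asm) sum_nonneg_eq_0_iff) (auto intro: finite_PiE)
  with f have "(\<Sum>j<n. d j * (\<Prod>l<length L. p j \<bullet> f l)) = 0"
    by simp
  moreover have "(\<Prod>l<length L. y \<bullet> f l) = basis_monomial L y" for y
    by (simp add: basis_monomial_def f_def prod.list_conv_set_nth atLeast0LessThan)
  ultimately show ?thesis
    by simp
qed

lemma sum_mult_prod_affine_eq_0:
  fixes p :: "nat \<Rightarrow> 'a::euclidean_space"
  assumes monomials: "\<And>L. set L \<subseteq> Basis \<Longrightarrow> (\<Sum>j<n. d j * basis_monomial L (p j)) = 0"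
    and "finite S" and "set L \<subseteq> Basis"
  shows "(\<Sum>j<n. d j * (\<Prod>i\<in>S. w i \<bullet> p j + c i) * basis_monomial L (p j)) = 0"
  using assms(2,3)
proof (induction S arbitrary: L rule: finite_induct)
  case empty
  then show ?case using monomials by simp
next
  case (insert a S)
  let ?P = "\<lambda>j. \<Prod>i\<in>S. w i \<bullet> p j + c i"
  have "(\<Sum>j<n. d j * (\<Prod>i\<in>insert a S. w i \<bullet> p j + c i) * basis_monomial L (p j))
      = (\<Sum>j<n. d j * ?P j * ((\<Sum>b\<in>Basis. (w a \<bullet> b) * basis_monomial (b # L) (p j))
          + c a * basis_monomial L (p j)))"
  proof (intro sum.cong refl)
    fix j
    have "w a \<bullet> p j = (\<Sum>b\<in>Basis. (w a \<bullet> b) * (p j \<bullet> b))"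
      by (rule euclidean_inner)
    with insert.hyps
    show "d j * (\<Prod>i\<in>insert a S. w i \<bullet> p j + c i) * basis_monomial L (p j)
        = d j * ?P j * ((\<Sum>b\<in>Basis. (w a \<bullet> b) * basis_monomial (b # L) (p j))
          + c a * basis_monomial L (p j))"
      by (simp add: basis_monomial_def sum_distrib_left sum_distrib_right algebra_simps)
  qed
  also have "\<dots> = (\<Sum>b\<in>Basis. (w a \<bullet> b) * (\<Sum>j<n. d j * ?P j * basis_monomial (b # L) (p j)))
        + c a * (\<Sum>j<n. d j * ?P j * basis_monomial L (p j))"
    by (simp add: distrib_left sum.distrib sum_distrib_left, subst sum.swap) (simp add: mult_ac)
  also have "\<dots> = 0"
    using insert.IH insert.prems by simp
  finally show ?case .
qed

lemma coefficients_eq_0_if_monomial_sums_eq_0: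
  fixes p :: "nat \<Rightarrow> 'a::euclidean_space"
  assumes "inj_on p {..<n}"
    and "\<And>L. set L \<subseteq> Basis \<Longrightarrow> (\<Sum>j<n. d j * basis_monomial L (p j)) = 0"
    and "k < n"
  shows "d k = 0"
proof -
  define S where "S = {..<n} - {k}"
  define P where "P j = (\<Prod>i\<in>S. (p k - p i) \<bullet> (p j - p i))" for j
  have "(\<Sum>j<n. d j * (\<Prod>i\<in>S. (p k - p i) \<bullet> p j + - ((p k - p i) \<bullet> p i)) * basis_monomial [] (p j)) = 0"
    using assms(2) by (rule sum_mult_prod_affine_eq_0) (simp_all add: S_def)
  then have "(\<Sum>j<n. d j * P j) = 0"
    by (simp add: P_def basis_monomial_def inner_diff_right)
  moreover have "P j = 0" if "j < n" "j \<noteq> k" for j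
    using that by (auto simp: P_def S_def prod_zero_iff intro!: bexI[of _ j])
  then have "(\<Sum>j<n. d j * P j) = d k * P k"
    using assms(3) by (subst sum.remove[of _ k]) (auto intro!: sum.neutral)
  moreover have "P k \<noteq> 0"
    using assms(1,3) by (auto simp: P_def S_def inj_on_def)
  ultimately show ?thesis
    by simp
qed

text \<open>Factoring exp (-t |x - y|^2) = exp (-t |x|^2) exp (-t |y|^2) exp (2 t (x \<bullet> y)) and expanding the
  last factor expresses the Gaussian kernel form as a series of forms in powers of inner products,
  each of which is a sum of squares.\<close>
lemma gaussian_kernel_form_sums:
  fixes zs :: "'a::euclidean_space list" and c :: "nat \<Rightarrow> real" and t :: real
  defines "d \<equiv> \<lambda>j. c j * exp (- t * (norm (zs ! j))\<^sup>2)"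
  shows "(\<lambda>m. (2 * t) ^ m / fact m * (\<Sum>j<length zs. \<Sum>k<length zs. d j * d k * (zs ! j \<bullet> zs ! k) ^ m))
      sums kernel_form (\<lambda>h. exp (- t * (norm h)\<^sup>2)) zs c"
proof -
  let ?n = "length zs"
  have factor: "c j * c k * exp (- t * (norm (zs ! j - zs ! k))\<^sup>2) = d j * d k * exp (2 * t * (zs ! j \<bullet> zs ! k))"
    for j k
  proof -
    have "(norm (zs ! j - zs ! k))\<^sup>2 = (norm (zs ! j))\<^sup>2 + (norm (zs ! k))\<^sup>2 - 2 * (zs ! j \<bullet> zs ! k)"
      by (simp add: power2_norm_eq_inner inner_diff_left inner_diff_right inner_commute)
    then have "- t * (norm (zs ! j - zs ! k))\<^sup>2
        = - t * (norm (zs ! j))\<^sup>2 + - t * (norm (zs ! k))\<^sup>2 + 2 * t * (zs ! j \<bullet> zs ! k)"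
      by (simp only:) (simp add: algebra_simps)
    then show ?thesis
      unfolding d_def by (simp only: exp_add) (simp add: mult_ac)
  qed
  have "(\<lambda>m. \<Sum>j<?n. \<Sum>k<?n. d j * d k * ((2 * t * (zs ! j \<bullet> zs ! k)) ^ m / fact m))
      sums (\<Sum>j<?n. \<Sum>k<?n. d j * d k * exp (2 * t * (zs ! j \<bullet> zs ! k)))"
  proof (intro sums_sum sums_mult)
    show "(\<lambda>m. y ^ m / fact m) sums exp y" for y :: real
      using exp_converges[of y] by (simp add: real_scaleR_def divide_inverse mult.commute)
  qed
  moreover have "kernel_form (\<lambda>h. exp (- t * (norm h)\<^sup>2)) zs c
      = (\<Sum>j<?n. \<Sum>k<?n. d j * d k * exp (2 * t * (zs ! j \<bullet> zs ! k)))"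
    unfolding kernel_form_def factor by (rule refl)
  ultimately show ?thesis
    by (simp add: power_mult_distrib sum_distrib_left mult_ac)
qed

lemma gaussian_kernel_form_nonneg:
  fixes zs :: "'a::euclidean_space list"
  assumes "0 < t"
  shows "0 \<le> kernel_form (\<lambda>h. exp (- t * (norm h)\<^sup>2)) zs c"
  using assms
  by (intro sums_le[OF _ sums_zero gaussian_kernel_form_sums])
     (simp add: inner_power_form_eq_sum_squares sum_nonneg)

lemma gaussian_kernel_form_pos:
  fixes zs :: "'a::euclidean_space list"
  assumes "0 < t" and "distinct zs" and "\<exists>j<length zs. c j \<noteq> 0"
  shows "0 < kernel_form (\<lambda>h. exp (- t * (norm h)\<^sup>2)) zs c"
proof (rule ccontr)
  define d where "d j = c j * exp (- t * (norm (zs ! j))\<^sup>2)" for j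
  define E where "E m = (\<Sum>j<length zs. \<Sum>k<length zs. d j * d k * (zs ! j \<bullet> zs ! k) ^ m)" for m
  have E_nonneg: "0 \<le> (2 * t) ^ m / fact m * E m" for m
    using assms(1) by (simp add: E_def inner_power_form_eq_sum_squares sum_nonneg)
  have sums: "(\<lambda>m. (2 * t) ^ m / fact m * E m) sums kernel_form (\<lambda>h. exp (- t * (norm h)\<^sup>2)) zs c"
    unfolding E_def d_def by (rule gaussian_kernel_form_sums)
  assume "\<not> 0 < kernel_form (\<lambda>h. exp (- t * (norm h)\<^sup>2)) zs c"
  with gaussian_kernel_form_nonneg[OF assms(1), of zs c]
  have "kernel_form (\<lambda>h. exp (- t * (norm h)\<^sup>2)) zs c = 0"
    by (meson not_less order_antisym)
  with sums have "(\<Sum>m. (2 * t) ^ m / fact m * E m) = 0"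
    by (simp add: sums_iff)
  then have "(2 * t) ^ m / fact m * E m = 0" for m
    using suminf_eq_zero_iff[OF sums_summable[OF sums] E_nonneg] by blast
  with assms(1) have "E m = 0" for m
    by simp
  then have monomials: "(\<Sum>j<length zs. d j * basis_monomial L (zs ! j)) = 0" if "set L \<subseteq> Basis" for L
    using monomial_sum_eq_0_if_inner_power_form_eq_0[OF _ that] by (simp add: E_def)
  have "inj_on ((!) zs) {..<length zs}"
    using assms(2) by (simp add: inj_on_def nth_eq_iff_index_eq)
  then have "d k = 0" if "k < length zs" for k
    using monomials that by (rule coefficients_eq_0_if_monomial_sums_eq_0)
  with assms(3) show False
    by (auto simp: d_def)
qed

section \<open>The Matern kernel as a mixture of Gaussian kernels\<close>

definition mixing_density :: "real \<Rightarrow> real \<Rightarrow> real \<Rightarrow> real" where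
  "mixing_density a \<rho> s = indicator {0<..} s * (s powr (a - 1) * exp (- s) * exp (- \<rho> / (4 * s)))"

definition gauss_mixture :: "real \<Rightarrow> real \<Rightarrow> real" where
  "gauss_mixture a \<rho> = (\<integral>s. mixing_density a \<rho> s \<partial>lborel) / Gamma a"

lemma mixing_density_nonneg: "0 \<le> mixing_density a \<rho> s"
  by (simp add: mixing_density_def)

lemma mixing_density_antimono: "0 \<le> \<rho> \<Longrightarrow> \<rho> \<le> \<rho>' \<Longrightarrow> mixing_density a \<rho>' s \<le> mixing_density a \<rho> s"
  by (cases "s > 0") (auto simp: mixing_density_def intro!: mult_left_mono divide_right_mono)

lemma borel_measurable_mixing_density [measurable]:
  "(\<lambda>s. mixing_density a \<rho> s) \<in> borel_measurable lborel"
  unfolding mixing_density_def by measurable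

lemma has_bochner_integral_mixing_density_0:
  assumes "0 < a"
  shows "has_bochner_integral lborel (mixing_density a 0) (Gamma a)"
proof -
  have "mixing_density a 0 t = indicator {0..} t * t powr (a - 1) / exp t" for t :: real
    by (cases "t < 0"; cases "t = 0") (auto simp: mixing_density_def exp_minus field_simps)
  then have "(\<integral>\<^sup>+t. ennreal (mixing_density a 0 t) \<partial>lborel) = ennreal (Gamma a)"
    by (simp add: Gamma_conv_nn_integral_real[OF assms])
  then show ?thesis
    by (intro has_bochner_integral_nn_integral)
       (auto simp: mixing_density_nonneg Gamma_real_pos assms less_imp_le)
qed

lemma integrable_mixing_density:
  assumes "0 < a" and "0 \<le> \<rho>"
  shows "integrable lborel (mixing_density a \<rho>)"
proof (rule Bochner_Integration.integrable_bound)
  show "integrable lborel (mixing_density a 0)"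
    using has_bochner_integral_mixing_density_0[OF assms(1)] by (rule integrable.intros)
  show "AE s in lborel. norm (mixing_density a \<rho> s) \<le> norm (mixing_density a 0 s)"
    using assms(2) by (intro AE_I2) (simp add: mixing_density_nonneg mixing_density_antimono)
qed simp

lemma gauss_mixture_0:
  assumes "0 < a" shows "gauss_mixture a 0 = 1"
proof -
  have "(\<integral>s. mixing_density a 0 s \<partial>lborel) = Gamma a"
    by (rule has_bochner_integral_integral_eq[OF has_bochner_integral_mixing_density_0[OF assms]])
  with Gamma_real_pos[OF assms] show ?thesis
    by (simp add: gauss_mixture_def)
qed

lemma borel_measurable_gauss_mixture: "gauss_mixture a \<in> borel_measurable borel"
  unfolding gauss_mixture_def mixing_density_def by measurable

lemma gauss_mixture_tendsto_1:
  assumes "0 < a"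
  shows "(gauss_mixture a \<longlongrightarrow> 1) (at_right 0)"
proof -
  have "((\<lambda>t. \<integral>s. mixing_density a (1 / t) s \<partial>lborel) \<longlongrightarrow> \<integral>s. mixing_density a 0 s \<partial>lborel) at_top"
  proof (rule integral_dominated_convergence_at_top[where w = "mixing_density a 0"])
    show "integrable lborel (mixing_density a 0)"
      using assms by (intro integrable_mixing_density) auto
    show "AE s in lborel. ((\<lambda>t. mixing_density a (1 / t) s) \<longlongrightarrow> mixing_density a 0 s) at_top"
    proof (intro AE_I2)
      fix s :: real
      show "((\<lambda>t. mixing_density a (1 / t) s) \<longlongrightarrow> mixing_density a 0 s) at_top"
      proof (cases "0 < s")
        case True
        have "((\<lambda>t::real. 1 / t) \<longlongrightarrow> 0) at_top"
          using tendsto_inverse_0_at_top[OF filterlim_ident] by (simp add: inverse_eq_divide)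
        then have "((\<lambda>t. s powr (a - 1) * exp (- s) * exp (- (1 / t) / (4 * s)))
            \<longlongrightarrow> s powr (a - 1) * exp (- s) * exp (- 0 / (4 * s))) at_top"
          using True by (intro tendsto_intros) auto
        with True show ?thesis
          by (simp add: mixing_density_def)
      qed (simp add: mixing_density_def)
    qed
    show "\<forall>\<^sub>F t in at_top. AE s in lborel. norm (mixing_density a (1 / t) s) \<le> mixing_density a 0 s"
      using eventually_gt_at_top[of 0]
      by eventually_elim (auto intro!: AE_I2 simp: mixing_density_nonneg mixing_density_antimono)
  qed simp_all
  then have "((\<lambda>t. gauss_mixture a (1 / t)) \<longlongrightarrow> gauss_mixture a 0) at_top"
    unfolding gauss_mixture_def using Gamma_real_pos[OF assms] by (intro tendsto_intros) auto
  from filterlim_compose[OF this filterlim_inverse_at_top_right] show ?thesis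
    by (simp add: gauss_mixture_0[OF assms] divide_inverse)
qed

lemma lborel_integral_even_split:
  fixes F :: "real \<Rightarrow> real"
  assumes F: "integrable lborel F"
  shows "(\<integral>x. F x \<partial>lborel) = (\<integral>x. indicator {0..} x * (F x + F (-x)) \<partial>lborel)"
proof -
  have "integrable lborel (\<lambda>x. F (0 + (-1) * x))"
    by (rule lborel_integrable_real_affine[OF F]) simp
  then have F_reflect: "integrable lborel (\<lambda>x. F (-x))"
    by simp
  have int_nonneg: "integrable lborel (\<lambda>x. F x * indicator {0..} x)"
    by (rule integrable_real_mult_indicator[OF _ F]) simp
  have int_neg: "integrable lborel (\<lambda>x. F x * indicator {..<0} x)"
    by (rule integrable_real_mult_indicator[OF _ F]) simp
  have int_reflect_nonneg: "integrable lborel (\<lambda>x. F (-x) * indicator {0..} x)"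
    by (rule integrable_real_mult_indicator[OF _ F_reflect]) simp
  have "(\<integral>x. F x \<partial>lborel) = (\<integral>x. F x * indicator {0..} x + F x * indicator {..<0} x \<partial>lborel)"
    by (intro Bochner_Integration.integral_cong refl) (auto simp: indicator_def)
  also have "\<dots> = (\<integral>x. F x * indicator {0..} x \<partial>lborel) + (\<integral>x. F x * indicator {..<0} x \<partial>lborel)"
    by (rule Bochner_Integration.integral_add[OF int_nonneg int_neg])
  also have "(\<integral>x. F x * indicator {..<0} x \<partial>lborel) = \<bar>-1\<bar> *\<^sub>R (\<integral>x. F (0 + (-1) * x) * indicator {..<0} (0 + (-1) * x) \<partial>lborel)"
    by (rule lborel_integral_real_affine) simp
  also have "\<dots> = (\<integral>x. F (-x) * indicator {0<..} x \<partial>lborel)"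
    by (simp add: indicator_def)
  also have "\<dots> = (\<integral>x. F (-x) * indicator {0..} x \<partial>lborel)"
  proof (rule integral_cong_AE)
    have int_reflect_pos: "integrable lborel (\<lambda>x. F (-x) * indicator {0<..} x)"
      by (rule integrable_real_mult_indicator[OF _ F_reflect]) simp
    show "(\<lambda>x. F (-x) * indicator {0<..} x) \<in> borel_measurable lborel"
      using int_reflect_pos by (rule borel_measurable_integrable)
    show "(\<lambda>x. F (-x) * indicator {0..} x) \<in> borel_measurable lborel"
      using int_reflect_nonneg by (rule borel_measurable_integrable)
    show "AE x in lborel. F (-x) * indicator {0<..} x = F (-x) * indicator {0..} x"
      using AE_lborel_singleton[of 0] by eventually_elim (auto simp: indicator_def)
  qed
  also have "(\<integral>x. F x * indicator {0..} x \<partial>lborel) + \<dots> = (\<integral>x. F x * indicator {0..} x + F (-x) * indicator {0..} x \<partial>lborel)"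
    by (rule Bochner_Integration.integral_add[OF int_nonneg int_reflect_nonneg, symmetric])
  also have "\<dots> = (\<integral>x. indicator {0..} x * (F x + F (-x)) \<partial>lborel)"
    by (intro Bochner_Integration.integral_cong refl) (simp add: algebra_simps)
  finally show ?thesis .
qed

lemma exp_cosh_ln_substitution:
  fixes a r s :: real
  assumes "0 < r" and "0 < s"
  shows "exp (- (r * cosh (ln (2 * s / r)))) * exp (a * ln (2 * s / r)) * (1 / s)
       = s powr (a - 1) * exp (- s) * exp (- r\<^sup>2 / (4 * s)) / (r / 2) powr a"
proof -
  have "r * cosh (ln (2 * s / r)) = s + r\<^sup>2 / (4 * s)"
    using assms by (simp add: cosh_def exp_minus field_simps power2_eq_square)
  then have cosh: "exp (- (r * cosh (ln (2 * s / r)))) = exp (- s) * exp (- r\<^sup>2 / (4 * s))"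
    by (simp add: mult_exp_exp)
  have power: "exp (a * ln (2 * s / r)) * (1 / s) = s powr (a - 1) / (r / 2) powr a"
    using assms by (simp add: powr_def ln_div ln_mult algebra_simps exp_diff exp_add)
  have "exp (- (r * cosh (ln (2 * s / r)))) * exp (a * ln (2 * s / r)) * (1 / s)
      = exp (- s) * exp (- r\<^sup>2 / (4 * s)) * (exp (a * ln (2 * s / r)) * (1 / s))"
    by (simp only: cosh mult.assoc)
  also have "\<dots> = s powr (a - 1) * exp (- s) * exp (- r\<^sup>2 / (4 * s)) / (r / 2) powr a"
    by (simp only: power) simp
  finally show ?thesis .
qed

lemma ereal_ln_plus_const_tendsto:
  shows "((ereal \<circ> (\<lambda>s. ln s + c) \<circ> real_of_ereal) \<longlongrightarrow> - \<infinity>) (at_right 0)"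
    and "((ereal \<circ> (\<lambda>s. ln s + c) \<circ> real_of_ereal) \<longlongrightarrow> \<infinity>) (at_left \<infinity>)"
proof -
  have "filterlim (\<lambda>s. c + ln s) at_bot (at_right 0)"
    by (subst filterlim_tendsto_add_at_bot_iff[OF tendsto_const]) (rule ln_at_0)
  then show "((ereal \<circ> (\<lambda>s. ln s + c) \<circ> real_of_ereal) \<longlongrightarrow> - \<infinity>) (at_right 0)"
    unfolding zero_ereal_def o_assoc ereal_tendsto_simps by (simp add: add.commute)
  have "filterlim (\<lambda>s. c + ln s) at_top at_top"
    by (rule filterlim_tendsto_add_at_top[OF tendsto_const ln_at_top])
  then show "((ereal \<circ> (\<lambda>s. ln s + c) \<circ> real_of_ereal) \<longlongrightarrow> \<infinity>) (at_left \<infinity>)"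
    unfolding o_assoc ereal_tendsto_simps by (simp add: add.commute)
qed

text \<open>The substitution u = ln (2 s / r) turns the integral of exp (- r cosh u + a u) into the
  mixing integral.\<close>
lemma
  fixes a r :: real
  assumes a: "0 < a" and r: "0 < r"
  shows integrable_exp_cosh: "integrable lborel (\<lambda>u. exp (- (r * cosh u)) * exp (a * u))"
    and integral_exp_cosh: "(\<integral>u. exp (- (r * cosh u)) * exp (a * u) \<partial>lborel)
      = (\<integral>s. mixing_density a (r\<^sup>2) s \<partial>lborel) / (r / 2) powr a"
proof -
  define F where "F = (\<lambda>u. exp (- (r * cosh u)) * exp (a * u))"
  define g where "g = (\<lambda>s. ln s + ln (2 / r))"
  define g' where "g' = (\<lambda>s::real. 1 / s)"
  have subst: "mixing_density a (r\<^sup>2) s / (r / 2) powr a = indicator {0<..} s * (F (g s) * g' s)" for s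
  proof (cases "0 < s")
    case True
    then have "g s = ln (2 * s / r)"
      using r by (simp add: g_def ln_div ln_mult)
    with exp_cosh_ln_substitution[OF r True, of a] True show ?thesis
      by (simp add: F_def g'_def mixing_density_def)
  qed (simp add: mixing_density_def)
  have "set_integrable lborel (einterval 0 \<infinity>) (\<lambda>s. F (g s) * g' s)"
    using integrable_divide[OF integrable_mixing_density[OF a, of "r\<^sup>2"], of "(r / 2) powr a"]
    by (simp add: set_integrable_def zero_ereal_def subst)
  note substitution = interval_integral_substitution_nonneg[of 0 \<infinity> g g' F "- \<infinity>" \<infinity>,
      OF _ _ _ _ _ _ ereal_ln_plus_const_tendsto[of "ln (2 / r)", folded g_def] this]
  have "set_integrable lborel (einterval (- \<infinity>) \<infinity>) F"
    by (rule substitution(1))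
       (auto simp: g_def g'_def F_def zero_ereal_def intro!: derivative_eq_intros continuous_intros)
  moreover have "(LBINT u=- \<infinity>..\<infinity>. F u) = (LBINT s=0..\<infinity>. F (g s) * g' s)"
    by (rule substitution(2))
       (auto simp: g_def g'_def F_def zero_ereal_def intro!: derivative_eq_intros continuous_intros)
  moreover have "(LBINT s=0..\<infinity>. F (g s) * g' s) = (\<integral>s. mixing_density a (r\<^sup>2) s \<partial>lborel) / (r / 2) powr a"
    by (simp add: interval_lebesgue_integral_def set_lebesgue_integral_def zero_ereal_def subst[symmetric])
  ultimately show "integrable lborel (\<lambda>u. exp (- (r * cosh u)) * exp (a * u))"
    and "(\<integral>u. exp (- (r * cosh u)) * exp (a * u) \<partial>lborel)
      = (\<integral>s. mixing_density a (r\<^sup>2) s \<partial>lborel) / (r / 2) powr a"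
    by (simp_all add: set_integrable_def interval_lebesgue_integral_def set_lebesgue_integral_def F_def)
qed

lemma besselK_eq_mixing_integral:
  fixes a r :: real
  assumes a: "0 < a" and r: "0 < r"
  shows "besselK a r = (\<integral>s. mixing_density a (r\<^sup>2) s \<partial>lborel) / (2 * (r / 2) powr a)"
proof -
  let ?F = "\<lambda>u. exp (- (r * cosh u)) * exp (a * u)"
  have "(\<integral>u. ?F u \<partial>lborel) = (\<integral>x. indicator {0..} x * (?F x + ?F (- x)) \<partial>lborel)"
    by (rule lborel_integral_even_split[OF integrable_exp_cosh[OF a r]])
  also have "\<dots> = (\<integral>x. 2 * (indicator {0..} x *\<^sub>R (exp (- r * cosh x) * cosh (a * x))) \<partial>lborel)"
    by (intro Bochner_Integration.integral_cong refl) (simp add: cosh_def algebra_simps)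
  also have "\<dots> = 2 * besselK a r"
    by (simp add: besselK_def set_lebesgue_integral_def)
  finally show ?thesis
    using integral_exp_cosh[OF a r] r by (simp add: field_simps)
qed

lemma matern_eq_gauss_mixture:
  assumes "real d / 2 < \<nu>"
  shows "matern \<nu> d = (\<lambda>h::'a::real_normed_vector. gauss_mixture (\<nu> - real d / 2) ((norm h)\<^sup>2))"
proof
  fix h :: 'a
  define a where "a = \<nu> - real d / 2"
  define r where "r = norm h"
  have "0 < a"
    using assms by (simp add: a_def)
  show "matern \<nu> d h = gauss_mixture (\<nu> - real d / 2) ((norm h)\<^sup>2)"
  proof (cases "h = 0")
    case True
    with \<open>0 < a\<close> show ?thesis
      by (simp add: matern_def gauss_mixture_0 a_def)
  next
    case False
    then have "0 < r"
      by (simp add: r_def)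
    have "2 powr (a - 1) * (2 * (r / 2) powr a) = r powr a"
      using \<open>0 < r\<close> by (simp add: powr_divide powr_diff)
    then have "matern \<nu> d h = (\<integral>s. mixing_density a (r\<^sup>2) s \<partial>lborel) / Gamma a"
      using False \<open>0 < r\<close> Gamma_real_pos[OF \<open>0 < a\<close>]
      by (simp add: matern_def a_def[symmetric] r_def[symmetric]
          besselK_eq_mixing_integral[OF \<open>0 < a\<close> \<open>0 < r\<close>] field_simps)
    then show ?thesis
      by (simp add: gauss_mixture_def a_def r_def)
  qed
qed

lemma isCont_matern_0:
  assumes "real d / 2 < \<nu>"
  shows "isCont (matern \<nu> d :: 'a::real_normed_vector \<Rightarrow> real) 0"
proof -
  have "((\<lambda>h::'a. (norm h)\<^sup>2) \<longlongrightarrow> 0) (at 0)"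
    by (intro tendsto_eq_intros) auto
  moreover have "eventually (\<lambda>h::'a. (norm h)\<^sup>2 \<in> {0<..} \<and> (norm h)\<^sup>2 \<noteq> 0) (at 0)"
    by (simp add: eventually_at_filter)
  ultimately have "filterlim (\<lambda>h::'a. (norm h)\<^sup>2) (at_right 0) (at 0)"
    by (simp add: filterlim_at)
  from filterlim_compose[OF gauss_mixture_tendsto_1 this] assms show ?thesis
    by (simp add: isCont_def matern_eq_gauss_mixture gauss_mixture_0)
qed

lemma borel_measurable_matern:
  assumes "real d / 2 < \<nu>"
  shows "(matern \<nu> d :: 'a::euclidean_space \<Rightarrow> real) \<in> borel_measurable borel"
  unfolding matern_eq_gauss_mixture[OF assms]
  by (intro measurable_compose[OF _ borel_measurable_gauss_mixture]) simp

lemma lborel_integral_pos: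
  fixes f :: "real \<Rightarrow> real"
  assumes "integrable lborel f" and "\<And>s. 0 \<le> f s" and "\<And>s. 0 < s \<Longrightarrow> 0 < f s"
  shows "0 < (\<integral>s. f s \<partial>lborel)"
proof -
  have "\<not> (AE s in lborel. s \<le> (0::real))"
  proof
    assume "AE s in lborel. s \<le> (0::real)"
    then have "emeasure lborel {0::real<..} = 0"
      by (subst (asm) AE_iff_measurable[of "{0<..}"]) auto
    moreover have "emeasure lborel {1::real..2} \<le> emeasure lborel {0::real<..}"
      by (rule emeasure_mono) auto
    ultimately show False
      by simp
  qed
  moreover have "s \<le> 0" if "f s = 0" for s
    using assms(3)[of s] that by force
  ultimately have "\<not> (AE s in lborel. f s = 0)"
    by (metis (mono_tags, lifting) eventually_mono)
  then have "(\<integral>s. f s \<partial>lborel) \<noteq> 0"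
    using integral_nonneg_eq_0_iff_AE[OF assms(1)] assms(2) by simp
  moreover have "0 \<le> (\<integral>s. f s \<partial>lborel)"
    using assms(2) by (simp add: Bochner_Integration.integral_nonneg)
  ultimately show ?thesis
    by simp
qed

lemma
  fixes zs :: "'a::euclidean_space list" and c :: "nat \<Rightarrow> real"
  assumes "real d / 2 < \<nu>"
  defines "a \<equiv> \<nu> - real d / 2"
  defines "G \<equiv> \<lambda>s. indicator {0<..} s * (s powr (a - 1) * exp (- s))
                    * kernel_form (\<lambda>h. exp (- (1 / (4 * s)) * (norm h)\<^sup>2)) zs c"
  shows integrable_matern_mixture: "integrable lborel G"
    and kernel_form_matern: "kernel_form (matern \<nu> d) zs c = (\<integral>s. G s \<partial>lborel) / Gamma a"
proof -
  have "0 < a"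
    using assms(1) by (simp add: a_def)
  let ?n = "length zs" and ?\<rho> = "\<lambda>j k. (norm (zs ! j - zs ! k))\<^sup>2"
  have "- (1 / (4 * s)) * \<rho> = - \<rho> / (4 * s)" for s \<rho> :: real
    by simp
  then have G_eq: "G = (\<lambda>s. \<Sum>j<?n. \<Sum>k<?n. c j * c k * mixing_density a (?\<rho> j k) s)"
    by (intro ext) (simp add: G_def kernel_form_def mixing_density_def sum_distrib_left mult_ac)
  show "integrable lborel G"
    unfolding G_eq using \<open>0 < a\<close>
    by (intro Bochner_Integration.integrable_sum Bochner_Integration.integrable_mult_right
        integrable_mixing_density) auto
  have "kernel_form (matern \<nu> d) zs c
      = (\<Sum>j<?n. \<Sum>k<?n. c j * c k * (\<integral>s. mixing_density a (?\<rho> j k) s \<partial>lborel)) / Gamma a"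
    using assms(1)
    by (simp add: kernel_form_def matern_eq_gauss_mixture gauss_mixture_def a_def[symmetric]
        sum_divide_distrib)
  also have "(\<Sum>j<?n. \<Sum>k<?n. c j * c k * (\<integral>s. mixing_density a (?\<rho> j k) s \<partial>lborel))
      = (\<integral>s. G s \<partial>lborel)"
    unfolding G_eq using \<open>0 < a\<close>
    by (subst Bochner_Integration.integral_sum, (intro Bochner_Integration.integrable_sum
          Bochner_Integration.integrable_mult_right integrable_mixing_density; simp)+,
        subst Bochner_Integration.integral_sum, (intro Bochner_Integration.integrable_mult_right
          integrable_mixing_density; simp)+)
       simp
  finally show "kernel_form (matern \<nu> d) zs c = (\<integral>s. G s \<partial>lborel) / Gamma a" .
qed

lemma pd_kernel_matern:
  assumes "real d / 2 < \<nu>"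
  shows "pd_kernel (matern \<nu> d :: 'a::euclidean_space \<Rightarrow> real)"
proof
  define a where "a = \<nu> - real d / 2"
  have "0 < a"
    using assms by (simp add: a_def)
  let ?G = "\<lambda>zs c s. indicator {0<..} s * (s powr (a - 1) * exp (- s))
      * kernel_form (\<lambda>h::'a. exp (- (1 / (4 * s)) * (norm h)\<^sup>2)) zs c"
  have G_nonneg: "0 \<le> ?G zs c s" for zs c s
  proof (cases "0 < s")
    case True
    then show ?thesis
      using gaussian_kernel_form_nonneg[of "1 / (4 * s)" zs c] by (intro mult_nonneg_nonneg) simp_all
  qed simp
  have G_pos: "0 < ?G zs c s" if "distinct zs" "\<exists>j<length zs. c j \<noteq> 0" "0 < s" for zs c s
    using gaussian_kernel_form_pos[of "1 / (4 * s)" zs c] that by (intro mult_pos_pos) simp_all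
  show "0 \<le> kernel_form (matern \<nu> d) zs c" for zs :: "'a list" and c
    using G_nonneg Gamma_real_pos[OF \<open>0 < a\<close>]
    by (simp only: kernel_form_matern[OF assms] a_def[symmetric])
       (intro divide_nonneg_pos Bochner_Integration.integral_nonneg)
  show "0 < kernel_form (matern \<nu> d) zs c"
    if "distinct zs" and "\<exists>j<length zs. c j \<noteq> 0" for zs :: "'a list" and c
    using G_nonneg G_pos[OF that] Gamma_real_pos[OF \<open>0 < a\<close>] integrable_matern_mixture[OF assms, of zs c]
    by (simp only: kernel_form_matern[OF assms] a_def[symmetric])
       (intro divide_pos_pos lborel_integral_pos)
  show "matern \<nu> d (- h) = matern \<nu> d h" for h :: 'a
    by (simp add: matern_def Let_def)
  show "matern \<nu> d (0::'a) = 1"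
    by (simp add: matern_def)
  show "isCont (matern \<nu> d :: 'a \<Rightarrow> real) 0"
    using assms by (rule isCont_matern_0)
  show "matern \<nu> d \<in> borel_measurable (borel :: 'a measure)"
    using assms by (rule borel_measurable_matern)
qed

theorem theorem3p4:
  fixes \<Omega> :: "(real ^ 'd) set" and \<nu> \<beta> :: real and v :: "real ^ 'd \<Rightarrow> real"
  assumes "convex \<Omega>" and "compact \<Omega>" and "0 < emeasure lebesgue \<Omega>"
    and "real CARD('d) / 2 < \<nu>"
    and "0 < \<beta>" and "\<beta> < 1"
    and "v \<in> borel_measurable (lebesgue_on \<Omega>)"
    and "integrable (lebesgue_on \<Omega>) (\<lambda>y. (v y)\<^sup>2)"
    and "\<exists>x\<in>\<Omega>. kernel_op (matern \<nu> CARD('d)) \<Omega> v x \<noteq> 0"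
  shows "\<exists>C>0. \<forall>X :: nat \<Rightarrow> (real ^ 'd) list.
           sampling_scheme \<Omega> X \<and> fill_distance_condition CARD('d) \<Omega> X \<longrightarrow>
           (\<exists>N. \<forall>n\<ge>N. AE x in lebesgue_on \<Omega>.
              \<bar>(kernel_op (matern \<nu> CARD('d)) \<Omega> v x
                 - kriging (matern \<nu> CARD('d)) (X n) (kernel_op (matern \<nu> CARD('d)) \<Omega> v) x)
               / ci_length \<beta> (matern \<nu> CARD('d)) (X n) (kernel_op (matern \<nu> CARD('d)) \<Omega> v) x\<bar> \<le> C)"
proof -
  let ?\<Psi> = "matern \<nu> CARD('d) :: real ^ 'd \<Rightarrow> real"
  let ?f = "kernel_op ?\<Psi> \<Omega> v"
  interpret pd_kernel ?\<Psi>
    using assms(4) by (rule pd_kernel_matern)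
  interpret finite_measure "lebesgue_on \<Omega>"
    using lmeasurable_compact[OF assms(2)] by (rule finite_measure_lebesgue_on)
  obtain x0 where x0: "x0 \<in> \<Omega>" "?f x0 \<noteq> 0"
    using assms(9) by blast
  define C where "C = (\<integral>y. \<bar>v y\<bar> \<partial>lebesgue_on \<Omega>) / (\<bar>std_normal_quantile (1 - \<beta> / 2)\<bar> * \<bar>?f x0\<bar>) + 1"
  obtain \<delta> where "0 < \<delta>" and bound: "\<And>xs x. distinct xs \<Longrightarrow> xs \<noteq> [] \<Longrightarrow> set xs \<subseteq> \<Omega> \<Longrightarrow>
      fill_distance \<Omega> xs < \<delta> \<Longrightarrow> \<bar>(?f x - kriging ?\<Psi> xs ?f x) / ci_length \<beta> ?\<Psi> xs ?f x\<bar> \<le> C - 1"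
    using kriging_error_over_ci_length_bounded[OF compact_imp_bounded[OF assms(2)] x0
        square_integrable_imp_integrable[OF assms(7,8)]] unfolding C_def by auto
  have "\<exists>N. \<forall>n\<ge>N. AE x in lebesgue_on \<Omega>. \<bar>(?f x - kriging ?\<Psi> (X n) ?f x) / ci_length \<beta> ?\<Psi> (X n) ?f x\<bar> \<le> C"
    if "sampling_scheme \<Omega> X \<and> fill_distance_condition CARD('d) \<Omega> X" for X
  proof -
    have "eventually (\<lambda>n. distinct (X n) \<and> X n \<noteq> [] \<and> set (X n) \<subseteq> \<Omega> \<and> fill_distance \<Omega> (X n) < \<delta>)
        sequentially"
      using that \<open>0 < \<delta>\<close> by (intro sampling_scheme_eventually_fine) auto
    then obtain N where N: "\<And>n. N \<le> n \<Longrightarrow>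
        distinct (X n) \<and> X n \<noteq> [] \<and> set (X n) \<subseteq> \<Omega> \<and> fill_distance \<Omega> (X n) < \<delta>"
      unfolding eventually_sequentially by blast
    have "\<bar>(?f x - kriging ?\<Psi> (X n) ?f x) / ci_length \<beta> ?\<Psi> (X n) ?f x\<bar> \<le> C - 1" if "N \<le> n" for n x
      using N[OF that] by (intro bound) auto
    then show ?thesis
      by (intro exI[of _ N] allI impI AE_I2) (smt (verit))
  qed
  moreover have "0 < C"
    using x0 by (simp add: C_def add_nonneg_pos)
  ultimately show ?thesis
    by blast
qed

end
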